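(* In the setting described in the context, assume $G$ satisfies Condition 1. Then for every $r\ge0$, at least $\max\{sp(\mathbf{A}),f+1\}$ columns of $\Phi(r+\nu-1,r)$ are lower bounded component-wise by $\beta^{\nu}\mathbf{1}$, where $\mathbf{1}\in\mathbb{R}^{n-\phi}$ is the all-ones column vector.
   Context: A synchronous system of $n$ agents communicates over a directed graph $G=(\mathcal{V},\mathcal{E})$, $\mathcal{V}=\{1,\dots,n\}$, without self-loops; $N_i^-=\{j:(j,i)\in\mathcal{E}\}$. At most $f$ agents are Byzantine faulty (may send arbitrary, possibly inconsistent values); $\mathcal{F}$ is the set of faulty agents, $\phi=|\mathcal{F}|\le f$, and the non-faulty agents are indexed $1,\dots,n-\phi$. An assignment matrix $\mathbf{A}\in\mathbb{R}^{k\times n}$ has nonnegative entries and columns summing to $1$; agent $i$ holds $g_i=\sum_{j=1}^k\mathbf{A}_{ji}h_j$ for admissible (convex, $L$-Lipschitz, nonempty compact argmin) $h_1,\dots,h_k:\mathbb{R}\to\mathbb{R}$. Sparsity parameter $sp(\mathbf{A})$: smallest $s$ such that the sum of any $s$ columns of $\mathbf{A}$ is component-wise positive ($n+1$ if the sum of all columns is not). Reduced graph w.r.t. $\mathcal{F}$: subgraph of $G$ obtained by removing the nodes of $\mathcal{F}$ with their edges and then removing up to $f$ additional incoming edges at each remaining node; $R_{\mathcal{F}}$ is the (finite) set of all reduced graphs and $\tau=|R_{\mathcal{F}}|$. A source component of a graph is the set of its nodes each having a directed path to every other node of the graph. Condition 1: for every $\mathcal{F}'\subseteq\mathcal{V}$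 with $|\mathcal{F}'|\le f$, every reduced graph w.r.t. $\mathcal{F}'$ has a source component with at least $\max\{f+1,sp(\mathbf{A})\}$ nodes. Algorithm 2 (run by non-faulty agents, step sizes $\alpha(t)$): arbitrary $x_i(0)$; in iteration $t\ge1$ agent $i$ sends $x_i(t-1)$ to all out-neighbors, receives a multiset of $|N_i^-|$ values (a default value replacing any missing message), discards the $f$ smallest and $f$ largest values (ties broken arbitrarily), lets $N_i^*(t)$ be the senders of the remaining values with $w_j$ the value from $j$, sets $w_i=x_i(t-1)$, and updates $x_i(t)=\frac{1}{|N_i^*(t)|+1}\sum_{j\in\{i\}\cup N_i^*(t)}w_j-\alpha(t-1)d_i(t-1)$, with $d_i(t-1)$ a (sub)gradient of $g_i$ at $x_i(t-1)$. Known matrix representation: with $\mathbf{x}(t)\in\mathbb{R}^{n-\phi}$ the vector of non-faulty states and $\mathbf{d}(t)$ the vector of the $d_i(t)$, one has $\mathbf{x}(t+1)=\mathbf{M}(t)\mathbf{x}(t)-\alpha(t)\mathbf{d}(t)$ for row-stochastic $(n-\phi)\times(n-\phi)$ matrices $\mathbf{M}(t)$ (depending on the execution), and there is a constant $0<\beta<1$ such that for every $t$ there is a reduced graph $\mathcal{H}(t)\in R_{\mathcal{F}}$ whose adjacency matrix $\mathbf{H}(t)$ (with $\mathbf{H}_{ij}(t)=1$ if $i=j$ or $(j,i)$ is an edge of $\mathcal{H}(t)$, and $0$ otherwise) satisfies $\mathbf{M}(t)\ge\beta\mathbf{H}(t)$ entrywise. Define $\Phi(t,r)=\mathbf{M}(t)\mathbf{M}(t-1)\cdots\mathbf{M}(r)$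 for $t\ge r$, and $\nu=\tau(n-\phi)$. *)

theory Defs
  imports Complex_Main
begin

text \<open>A directed graph is given by its edge set E :: (nat \<times> nat) set,
  where (j,i) \<in> E means an edge from j to i. Matrices are functions nat \<Rightarrow> nat \<Rightarrow> real;
  the (n-phi)x(n-phi) matrices on the non-faulty agents are indexed directly by the set
  NF = {1..n} - F of non-faulty agents (a relabelling of 1..n-phi).\<close>

definition agents :: "nat \<Rightarrow> nat set" where
  "agents n = {1..n}"

definition digraph :: "nat \<Rightarrow> (nat \<times> nat) set \<Rightarrow> bool" where
  "digraph n E \<longleftrightarrow> E \<subseteq> agents n \<times> agents n \<and> (\<forall>i. (i, i) \<notin> E)"

definition assignment_matrix :: "nat \<Rightarrow> nat \<Rightarrow> (nat \<Rightarrow> nat \<Rightarrow> real) \<Rightarrow> bool" where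
  "assignment_matrix k n A \<longleftrightarrow>
     (\<forall>j\<in>{1..k}. \<forall>i\<in>{1..n}. A j i \<ge> 0) \<and> (\<forall>i\<in>{1..n}. (\<Sum>j\<in>{1..k}. A j i) = 1)"

definition sp :: "nat \<Rightarrow> nat \<Rightarrow> (nat \<Rightarrow> nat \<Rightarrow> real) \<Rightarrow> nat" where
  "sp k n A = (if (\<forall>j\<in>{1..k}. (\<Sum>i\<in>{1..n}. A j i) > 0)
      then (LEAST s. \<forall>S. S \<subseteq> {1..n} \<and> card S = s \<longrightarrow> (\<forall>j\<in>{1..k}. (\<Sum>i\<in>S. A j i) > 0))
      else n + 1)"

text \<open>A reduced graph is
  represented by its edge set (its node set is always agents n - F).\<close>
definition reduced_graph :: "nat \<Rightarrow> (nat \<times> nat) set \<Rightarrow> nat \<Rightarrow> nat set \<Rightarrow> (nat \<times> nat) set \<Rightarrow> bool" where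
  "reduced_graph n E f F H \<longleftrightarrow>
     H \<subseteq> {(j, i) \<in> E. j \<notin> F \<and> i \<notin> F} \<and>
     (\<forall>i \<in> agents n - F. card ({j. (j, i) \<in> E \<and> j \<notin> F} - {j. (j, i) \<in> H}) \<le> f)"

definition reduced_graphs :: "nat \<Rightarrow> (nat \<times> nat) set \<Rightarrow> nat \<Rightarrow> nat set \<Rightarrow> (nat \<times> nat) set set" where
  "reduced_graphs n E f F = {H. reduced_graph n E f F H}"

definition source_component :: "nat set \<Rightarrow> (nat \<times> nat) set \<Rightarrow> nat set" where
  "source_component W H = {s \<in> W. \<forall>v \<in> W. (s, v) \<in> H\<^sup>*}"

definition condition1 :: "nat \<Rightarrow> (nat \<times> nat) set \<Rightarrow> nat \<Rightarrow> nat \<Rightarrow> (nat \<Rightarrow> nat \<Rightarrow> real) \<Rightarrow> bool" where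
  "condition1 n E f k A \<longleftrightarrow>
     (\<forall>F'. F' \<subseteq> agents n \<and> card F' \<le> f \<longrightarrow>
        (\<forall>H \<in> reduced_graphs n E f F'.
           card (source_component (agents n - F') H) \<ge> max (f + 1) (sp k n A)))"

definition adj :: "(nat \<times> nat) set \<Rightarrow> nat \<Rightarrow> nat \<Rightarrow> real" where
  "adj H i j = (if i = j \<or> (j, i) \<in> H then 1 else 0)"

definition row_stochastic :: "nat set \<Rightarrow> (nat \<Rightarrow> nat \<Rightarrow> real) \<Rightarrow> bool" where
  "row_stochastic N P \<longleftrightarrow> (\<forall>i\<in>N. (\<forall>j\<in>N. P i j \<ge> 0) \<and> (\<Sum>j\<in>N. P i j) = 1)"

fun mprod :: "(nat \<Rightarrow> nat \<Rightarrow> nat \<Rightarrow> real) \<Rightarrow> nat set \<Rightarrow> nat \<Rightarrow> nat \<Rightarrow> nat \<Rightarrow> nat \<Rightarrow> real" where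
  "mprod M N r 0 = M r"
| "mprod M N r (Suc m) = (\<lambda>i j. \<Sum>l\<in>N. M (r + Suc m) i l * mprod M N r m l j)"

definition Phi :: "(nat \<Rightarrow> nat \<Rightarrow> nat \<Rightarrow> real) \<Rightarrow> nat set \<Rightarrow> nat \<Rightarrow> nat \<Rightarrow> nat \<Rightarrow> nat \<Rightarrow> real" where
  "Phi M N t r = mprod M N r (t - r)"

end

theory Submission
  imports Defs "HOL-Library.Transitive_Closure_Table" "HOL-Library.FuncSet"
begin

text \<open>Every matrix M(t) dominates \<beta> times the adjacency matrix of some reduced graph, and
  adjacency matrices have a unit diagonal.  Hence a product of consecutive M(t) dominates
  \<beta> to the number of factors along any path that, at each factor, either waits at its
  current node or traverses an edge of the graph chosen for that factor.  Over \<nu> = \<tau>|N|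
  consecutive factors some reduced graph H is chosen at least |N| times (pigeonhole), and
  every node of N is reachable from each node of the source component of H by a path of
  fewer than |N| edges of H.  So the columns of \<Phi>(r+\<nu>-1, r) indexed by that source
  component, which is large by Condition 1, are bounded below by \<beta>^\<nu>.\<close>

lemma rtrancl_path_relpow:
  "rtrancl_path (\<lambda>a b. (a, b) \<in> R) x xs y \<Longrightarrow> (x, y) \<in> R ^^ length xs"
  by (induction rule: rtrancl_path.induct) (simp_all add: relpow_Suc_I2 relpow_0_I del: relpow.simps)

lemma rtrancl_path_set_subset:
  "rtrancl_path (\<lambda>a b. (a, b) \<in> R) x xs y \<Longrightarrow> R \<subseteq> V \<times> V \<Longrightarrow> set xs \<subseteq> V"
  by (induction rule: rtrancl_path.induct) auto

lemma rtrancl_imp_relpow_less_card: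
  assumes "(x, y) \<in> R\<^sup>*" and "R \<subseteq> V \<times> V" and "finite V" and "x \<in> V"
  obtains d where "d < card V" and "(x, y) \<in> R ^^ d"
proof -
  have "(\<lambda>a b. (a, b) \<in> R)\<^sup>*\<^sup>* x y"
    using assms(1) by (simp add: rtrancl_def)
  then obtain xs where "rtrancl_path (\<lambda>a b. (a, b) \<in> R) x xs y"
    by (auto simp: rtranclp_eq_rtrancl_path)
  then obtain xs' where path: "rtrancl_path (\<lambda>a b. (a, b) \<in> R) x xs' y"
    and distinct: "distinct (x # xs')"
    by (rule rtrancl_path_distinct)
  have "set (x # xs') \<subseteq> V"
    using rtrancl_path_set_subset[OF path assms(2)] assms(4) by auto
  then have "length (x # xs') \<le> card V"
    using distinct assms(3) by (metis card_mono distinct_card)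
  then show ?thesis
    using that rtrancl_path_relpow[OF path] by (simp add: Suc_le_eq)
qed

lemma mprod_nonneg:
  assumes "finite N" and "\<And>t i j. i \<in> N \<Longrightarrow> j \<in> N \<Longrightarrow> 0 \<le> M t i j"
    and "i \<in> N" and "j \<in> N"
  shows "0 \<le> mprod M N r m i j"
  using assms(3) by (induction m arbitrary: i) (auto intro!: sum_nonneg mult_nonneg_nonneg assms)

lemma mprod_Suc_ge_term:
  assumes "finite N" and nonneg: "\<And>t i j. i \<in> N \<Longrightarrow> j \<in> N \<Longrightarrow> 0 \<le> M t i j"
    and "i \<in> N" and "l \<in> N" and "j \<in> N"
  shows "M (r + Suc m) i l * mprod M N r m l j \<le> mprod M N r (Suc m) i j"
proof -
  have "\<And>l'. l' \<in> N \<Longrightarrow> 0 \<le> M (r + Suc m) i l' * mprod M N r m l' j"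
    using assms by (auto intro!: mult_nonneg_nonneg mprod_nonneg)
  then show ?thesis
    using assms by (auto intro: member_le_sum)
qed

lemma adj_eq_1:
  "i = j \<or> (j, i) \<in> H \<Longrightarrow> adj H i j = 1"
  by (simp add: adj_def)

lemma card_atMost_filter_0:
  "card {s::nat. s \<le> 0 \<and> P s} = (if P 0 then 1 else 0)"
proof -
  have "{s::nat. s \<le> 0 \<and> P s} = (if P 0 then {0} else {})"
    by auto
  then show ?thesis by simp
qed

lemma card_atMost_filter_Suc:
  "card {s. s \<le> Suc m \<and> P s} = card {s. s \<le> m \<and> P s} + (if P (Suc m) then 1 else 0)"
proof -
  have "{s. s \<le> Suc m \<and> P s} = (if P (Suc m) then insert (Suc m) else id) {s. s \<le> m \<and> P s}"
    by (auto simp: le_Suc_eq)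
  then show ?thesis by simp
qed

lemma mprod_ge_power_if_relpow:
  fixes \<beta> :: real
  assumes fin: "finite N" and nonneg: "\<And>t i j. i \<in> N \<Longrightarrow> j \<in> N \<Longrightarrow> 0 \<le> M t i j"
    and "0 \<le> \<beta>"
    and lower: "\<And>t i j. i \<in> N \<Longrightarrow> j \<in> N \<Longrightarrow> \<beta> * adj (Hs t) i j \<le> M t i j"
    and HN: "H \<subseteq> N \<times> N" and "j \<in> N"
  shows "i \<in> N \<Longrightarrow> (j, i) \<in> H ^^ d \<Longrightarrow> d \<le> card {s. s \<le> m \<and> Hs (r + s) = H}
           \<Longrightarrow> \<beta> ^ Suc m \<le> mprod M N r m i j"
proof (induction m arbitrary: i d)
  case 0
  then have "d \<le> (if Hs r = H then 1 else 0)"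
    using card_atMost_filter_0[of "\<lambda>s. Hs (r + s) = H"] by simp
  then have "i = j \<or> (j, i) \<in> Hs r"
    using "0.prems"(2) by (cases d) (auto split: if_splits)
  then show ?case
    using lower[OF \<open>i \<in> N\<close> \<open>j \<in> N\<close>, of r] by (simp add: adj_eq_1)
next
  case (Suc m)
  let ?count = "card {s. s \<le> m \<and> Hs (r + s) = H}"
  \<comment> \<open>Either wait at i during the last factor, or enter i by the last edge of the path.\<close>
  obtain l where "l \<in> N" and "i = l \<or> (l, i) \<in> Hs (r + Suc m)"
    and IH: "\<beta> ^ Suc m \<le> mprod M N r m l j"
  proof (cases "d \<le> ?count")
    case True
    then show ?thesis
      using that Suc.IH Suc.prems by blast
  next
    case False
    with Suc.prems(3) have "Hs (r + Suc m) = H" and "d = Suc ?count"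
      by (auto simp: card_atMost_filter_Suc split: if_splits)
    with Suc.prems(2) obtain l where "(j, l) \<in> H ^^ ?count" and "(l, i) \<in> H"
      by auto
    then show ?thesis
      using that Suc.IH HN \<open>Hs (r + Suc m) = H\<close> by blast
  qed
  then have "\<beta> \<le> M (r + Suc m) i l"
    using lower[OF \<open>i \<in> N\<close> \<open>l \<in> N\<close>, of "r + Suc m"] by (simp add: adj_eq_1)
  then have "\<beta> * \<beta> ^ Suc m \<le> M (r + Suc m) i l * mprod M N r m l j"
    using IH \<open>0 \<le> \<beta>\<close> by (intro mult_mono) auto
  also have "\<dots> \<le> mprod M N r (Suc m) i j"
    using fin nonneg Suc.prems(1) \<open>l \<in> N\<close> \<open>j \<in> N\<close> by (rule mprod_Suc_ge_term)
  finally show ?case by simp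
qed

lemma mprod_ge_power_on_source_component:
  fixes \<beta> :: real
  assumes fin: "finite N" and nonneg: "\<And>t i j. i \<in> N \<Longrightarrow> j \<in> N \<Longrightarrow> 0 \<le> M t i j"
    and "0 \<le> \<beta>"
    and lower: "\<And>t i j. i \<in> N \<Longrightarrow> j \<in> N \<Longrightarrow> \<beta> * adj (Hs t) i j \<le> M t i j"
    and HN: "H \<subseteq> N \<times> N"
    and often: "card N \<le> card {s. s \<le> m \<and> Hs (r + s) = H}"
    and "j \<in> source_component N H" and "i \<in> N"
  shows "\<beta> ^ Suc m \<le> mprod M N r m i j"
proof -
  have "j \<in> N" and "(j, i) \<in> H\<^sup>*"
    using assms(7,8) by (auto simp: source_component_def)
  then obtain d where "d < card N" and "(j, i) \<in> H ^^ d"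
    using rtrancl_imp_relpow_less_card HN fin by metis
  then show ?thesis
    using mprod_ge_power_if_relpow[OF fin nonneg \<open>0 \<le> \<beta>\<close> lower HN \<open>j \<in> N\<close> \<open>i \<in> N\<close>] often
    by simp
qed

lemma reduced_graph_subset:
  "digraph n E \<Longrightarrow> H \<in> reduced_graphs n E f F \<Longrightarrow> H \<subseteq> (agents n - F) \<times> (agents n - F)"
  by (auto simp: digraph_def reduced_graphs_def reduced_graph_def)

lemma finite_reduced_graphs:
  assumes "digraph n E"
  shows "finite (reduced_graphs n E f F)"
proof -
  have "finite E"
    using assms unfolding digraph_def agents_def
    by (meson finite_SigmaI finite_atLeastAtMost finite_subset)
  moreover have "reduced_graphs n E f F \<subseteq> Pow E"
    by (auto simp: reduced_graphs_def reduced_graph_def)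
  ultimately show ?thesis
    by (meson finite_Pow_iff finite_subset)
qed

lemma frequent_value_in_window:
  assumes "finite S" and "\<And>t. g t \<in> S" and "0 < c"
  obtains x where "x \<in> S" and "c \<le> card {s. s \<le> card S * c - 1 \<and> g (r + s) = x}"
proof -
  have "0 < card S"
    using assms(1,2) card_gt_0_iff by blast
  then have window: "card {..card S * c - 1} = card S * c"
    using \<open>0 < c\<close> by simp
  have "(\<lambda>s. g (r + s)) \<in> {..card S * c - 1} \<rightarrow> S"
    using assms(2) by blast
  then obtain x where "x \<in> S"
    and "card {..card S * c - 1} \<le> card ((\<lambda>s. g (r + s)) -` {x} \<inter> {..card S * c - 1}) * card S"
    using pigeonhole_card \<open>0 < card S\<close> assms(1) by (metis card_gt_0_iff finite_atMost)
  moreover have "(\<lambda>s. g (r + s)) -` {x} \<inter> {..card S * c - 1} = {s. s \<le> card S * c - 1 \<and> g (r + s) = x}"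
    by auto
  ultimately show ?thesis
    using that window \<open>0 < card S\<close> by (simp add: mult.commute)
qed

theorem lemma2:
  fixes n f k :: nat and E :: "(nat \<times> nat) set" and A :: "nat \<Rightarrow> nat \<Rightarrow> real"
    and F :: "nat set" and M :: "nat \<Rightarrow> nat \<Rightarrow> nat \<Rightarrow> real" and \<beta> :: real
  assumes G: "digraph n E"
    and A: "assignment_matrix k n A"
    and cond1: "condition1 n E f k A"
    and F: "F \<subseteq> agents n" "card F \<le> f"
    and stoch: "\<And>t. row_stochastic (agents n - F) (M t)"
    and beta: "0 < \<beta>" "\<beta> < 1"
    and lower: "\<And>t. \<exists>H \<in> reduced_graphs n E f F.
                  \<forall>i \<in> agents n - F. \<forall>j \<in> agents n - F. M t i j \<ge> \<beta> * adj H i j"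
  shows "\<forall>r::nat. \<exists>C \<subseteq> agents n - F.
           card C \<ge> max (sp k n A) (f + 1) \<and>
           (\<forall>j \<in> C. \<forall>i \<in> agents n - F.
              Phi M (agents n - F)
                  (r + card (reduced_graphs n E f F) * (n - card F) - 1) r i j
              \<ge> \<beta> ^ (card (reduced_graphs n E f F) * (n - card F)))"
proof
  fix r :: nat
  define N where "N = agents n - F"
  define RG where "RG = reduced_graphs n E f F"
  define \<nu> where "\<nu> = card RG * card N"
  have "\<forall>t. \<exists>H. H \<in> RG \<and> (\<forall>i \<in> N. \<forall>j \<in> N. \<beta> * adj H i j \<le> M t i j)"
    using lower unfolding N_def RG_def by blast
  then obtain Hs where Hs: "\<And>t. Hs t \<in> RG \<and> (\<forall>i \<in> N. \<forall>j \<in> N. \<beta> * adj (Hs t) i j \<le> M t i j)"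
    by metis
  have fin: "finite N" and cardN: "card N = n - card F"
    using F(1) by (auto simp: N_def agents_def card_Diff_subset finite_subset)
  have finRG: "finite RG"
    unfolding RG_def using G by (rule finite_reduced_graphs)
  have nonneg: "\<And>t i j. i \<in> N \<Longrightarrow> j \<in> N \<Longrightarrow> 0 \<le> M t i j"
    using stoch by (simp add: row_stochastic_def N_def)
  have HN: "\<And>H. H \<in> RG \<Longrightarrow> H \<subseteq> N \<times> N"
    using reduced_graph_subset[OF G] by (simp add: N_def RG_def)
  have large: "\<And>H. H \<in> RG \<Longrightarrow> max (f + 1) (sp k n A) \<le> card (source_component N H)"
    using cond1 F unfolding condition1_def N_def RG_def by blast
  have source_sub: "\<And>H. source_component N H \<subseteq> N"
    by (auto simp: source_component_def)
  have "0 < card (source_component N (Hs 0))"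
    using large[of "Hs 0"] Hs[of 0] by simp
  then have "0 < card N"
    using card_mono[OF fin source_sub] by (meson less_le_trans)
  then obtain H where "H \<in> RG" and often: "card N \<le> card {s. s \<le> \<nu> - 1 \<and> Hs (r + s) = H}"
    using frequent_value_in_window[OF finRG] Hs unfolding \<nu>_def by metis
  have "0 < \<nu>"
    using \<open>0 < card N\<close> \<open>H \<in> RG\<close> finRG card_gt_0_iff by (auto simp: \<nu>_def)
  have "\<beta> ^ \<nu> \<le> Phi M N (r + \<nu> - 1) r i j" if "j \<in> source_component N H" "i \<in> N" for i j
    using mprod_ge_power_on_source_component[OF fin nonneg _ _ HN[OF \<open>H \<in> RG\<close>] often that]
      Hs beta \<open>0 < \<nu>\<close>
    by (simp add: Phi_def)
  then show "\<exists>C \<subseteq> agents n - F. card C \<ge> max (sp k n A) (f + 1) \<and>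
      (\<forall>j \<in> C. \<forall>i \<in> agents n - F. Phi M (agents n - F)
          (r + card (reduced_graphs n E f F) * (n - card F) - 1) r i j
        \<ge> \<beta> ^ (card (reduced_graphs n E f F) * (n - card F)))"
    using source_sub large[OF \<open>H \<in> RG\<close>]
    unfolding N_def[symmetric] RG_def[symmetric] cardN[symmetric] \<nu>_def[symmetric]
    by (metis max.commute)
qed

end
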